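(* Let $L\ge 3$, $W=(\mathbb{Z}/2\mathbb{Z})^{*L}$ with generating set $S$, $q\in(0,1]$, $h=\sum_{s\in S}T_s$, and let $R_h$ be the operator on $\ell^2(W)$ of right multiplication by $h$. For every $v,w\in W$ with $|v|=|w|$ and every $\epsilon>0$ there exists $\eta\in\ell^2(W)$ such that $$\|e_v-e_w-(h\eta-R_h\eta)\|_2<\epsilon.$$
   Context: $W=(\mathbb{Z}/2\mathbb{Z})^{*L}$ is the free product of $L$ copies of $\mathbb{Z}/2\mathbb{Z}$; $S$ is the set of the $L$ canonical generators, $|\cdot|$ is word length with respect to $S$. Put $p=\frac{q-1}{q^2}$. $\mathbb{C}_q[W]$ is the $*$-algebra with linear basis $\{T_w: w\in W\}$, $T_e=1$, $T_w^*=T_{w^{-1}}$, and for $s\in S$, $w\in W$: $T_sT_w=T_{sw}$ if $|sw|>|w|$, $T_sT_w=T_{sw}+pT_w$ if $|sw|<|w|$ (equivalently $T_wT_s=T_{ws}$ if $|ws|>|w|$, $T_wT_s=T_{ws}+pT_w$ if $|ws|<|w|$). Identify $T_w$ with $e_w=\delta_w\in\ell^2(W)$; left multiplication by $h$ extends to a bounded operator (again denoted $h$) on $\ell^2(W)$, and right multiplication by $h$, $T_v\mapsto T_vh$, extends to a bounded operator $R_h$ on $\ell^2(W)$. *)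

theory Defs
  imports "HOL-Analysis.Analysis"
begin

text \<open>Elements of W = free product of L copies of Z/2 are represented by reduced words:
  lists over the generators {0..<L} with no two consecutive letters equal.
  Word length is list length.\<close>

definition Wset :: "nat \<Rightarrow> nat list set" where
  "Wset L = {xs. set xs \<subseteq> {..<L} \<and> (\<forall>i. Suc i < length xs \<longrightarrow> xs ! i \<noteq> xs ! Suc i)}"

definition lmul :: "nat \<Rightarrow> nat list \<Rightarrow> nat list" where
  "lmul s w = (if w \<noteq> [] \<and> hd w = s then tl w else s # w)"

definition rmul :: "nat list \<Rightarrow> nat \<Rightarrow> nat list" where
  "rmul w s = (if w \<noteq> [] \<and> last w = s then butlast w else w @ [s])"

definition hecke_p :: "real \<Rightarrow> real" where
  "hecke_p q = (q - 1) / q\<^sup>2"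

text \<open>Left multiplication by h = sum of T_s, on functions W -> C (coordinates w.r.t. e_x):
  T_s e_w = e_{sw} if |sw|>|w|, and e_{sw} + p e_w if |sw|<|w|; hence
  (T_s eta)(x) = eta(sx) + (if |sx|<|x| then p eta(x) else 0).\<close>
definition left_h :: "nat \<Rightarrow> real \<Rightarrow> (nat list \<Rightarrow> complex) \<Rightarrow> nat list \<Rightarrow> complex" where
  "left_h L q \<eta> x = (\<Sum>s<L. \<eta> (lmul s x)
      + (if length (lmul s x) < length x then of_real (hecke_p q) * \<eta> x else 0))"

definition right_h :: "nat \<Rightarrow> real \<Rightarrow> (nat list \<Rightarrow> complex) \<Rightarrow> nat list \<Rightarrow> complex" where
  "right_h L q \<eta> x = (\<Sum>s<L. \<eta> (rmul x s)
      + (if length (rmul x s) < length x then of_real (hecke_p q) * \<eta> x else 0))"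

definition delta :: "nat list \<Rightarrow> nat list \<Rightarrow> complex" where
  "delta v x = (if x = v then 1 else 0)"

definition is_l2 :: "nat \<Rightarrow> (nat list \<Rightarrow> complex) \<Rightarrow> bool" where
  "is_l2 L f \<longleftrightarrow> (\<forall>x. x \<notin> Wset L \<longrightarrow> f x = 0) \<and> (\<lambda>x. (norm (f x))\<^sup>2) summable_on Wset L"

definition l2norm :: "nat \<Rightarrow> (nat list \<Rightarrow> complex) \<Rightarrow> real" where
  "l2norm L f = sqrt (infsum (\<lambda>x. (norm (f x))\<^sup>2) (Wset L))"

end

theory Submission
  imports Defs
begin

(* In h eta - R_h eta the p-terms cancel, leaving D eta (x) = sum_s (eta (s x) - eta (x s)), so
   the claim is that e_v - e_w lies in the closure of the range of D.
   Fix a reduced word y, put b = L - 1 and let 1_k be the indicator of the reduced words a y c with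
   |a| = |c| = k.  Let d_k be the difference of the indicators of the words a y c with
   (|a|, |c|) = (k + 1, k) and (k, k + 1).  Then D 1_0 = d_0 + e_(tl y) - e_(butlast y) and
   D 1_k = d_k - b d_(k-1) for k > 0, and the weights (N - k) / (N b^k) telescope these relations:
     D (sum_(k<N) (N - k) / (N b^k) 1_k) = e_(tl y) - e_(butlast y) + sum_(k<N) d_k / (N b^k).
   As d_k is supported on at most 8 b^(2k+1) words, the error has squared norm at most 8 b / N.
   So tl y and butlast y are related.  Consecutive windows of length n of a reduced word are tl and
   butlast of a window of length n + 1, hence x and z are related whenever z x is reduced, and with
   a third letter any two words of equal length are linked through an alternating word. *)

section \<open>Reduced words\<close>

lemma Wset_Nil [simp]: "[] \<in> Wset L"
  unfolding Wset_def by auto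

lemma Wset_Cons_iff: "s # x \<in> Wset L \<longleftrightarrow> s < L \<and> x \<in> Wset L \<and> (x = [] \<or> s \<noteq> hd x)"
  unfolding Wset_def by (cases x) (auto simp: nth_Cons split: nat.splits)

lemma Wset_snoc_iff: "x @ [s] \<in> Wset L \<longleftrightarrow> s < L \<and> x \<in> Wset L \<and> (x = [] \<or> s \<noteq> last x)"
  by (induction x) (auto simp: Wset_Cons_iff)

lemma Wset_rev_iff: "rev x \<in> Wset L \<longleftrightarrow> x \<in> Wset L"
  by (induction x) (auto simp: Wset_Cons_iff Wset_snoc_iff last_rev)

lemma Wset_append:
  assumes "a \<in> Wset L" "b \<in> Wset L" "a = [] \<or> b = [] \<or> last a \<noteq> hd b"
  shows "a @ b \<in> Wset L"
  using assms
proof (induction a)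
  case (Cons s a)
  then show ?case by (cases a; cases b) (auto simp: Wset_Cons_iff)
qed simp

lemma Wset_subset: "x \<in> Wset L \<Longrightarrow> set x \<subseteq> {..<L}"
  unfolding Wset_def by blast

lemma Wset_take: "x \<in> Wset L \<Longrightarrow> take i x \<in> Wset L"
  unfolding Wset_def by (auto dest: in_set_takeD)

lemma Wset_drop: "x \<in> Wset L \<Longrightarrow> drop i x \<in> Wset L"
  unfolding Wset_def by (auto dest: in_set_dropD)

lemma Wset_tl: "x \<in> Wset L \<Longrightarrow> tl x \<in> Wset L"
  by (metis Wset_drop drop_Suc drop_0)

lemma rmul_eq_rev_lmul: "rmul x s = rev (lmul s (rev x))"
  unfolding rmul_def lmul_def by (simp add: hd_rev) (metis butlast_rev rev_rev_ident)

lemma length_lmul_less_iff: "length (lmul s x) < length x \<longleftrightarrow> x \<noteq> [] \<and> hd x = s"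
  unfolding lmul_def by auto

lemma length_rmul_less_iff: "length (rmul x s) < length x \<longleftrightarrow> x \<noteq> [] \<and> last x = s"
  using length_lmul_less_iff[of s "rev x"] by (simp add: rmul_eq_rev_lmul hd_rev)

lemma finite_Wset_length_le: "finite {x \<in> Wset L. length x \<le> n}"
  by (rule finite_subset[OF _ finite_lists_length_le[of "{..<L}" n]]) (auto simp: Wset_def)

definition words :: "nat \<Rightarrow> nat \<Rightarrow> nat list set" where
  "words L n = {x \<in> Wset L. length x = n}"

lemma finite_words: "finite (words L n)"
  by (rule finite_subset[OF _ finite_Wset_length_le[of L n]]) (auto simp: words_def)

lemma words_0: "words L 0 = {[]}"
  by (auto simp: words_def)

lemma words_Suc:
  "words L (Suc n) = (\<lambda>(x, s). s # x) ` (SIGMA x:words L n. {s. s < L \<and> (x = [] \<or> s \<noteq> hd x)})"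
  by (auto simp: words_def Wset_Cons_iff length_Suc_conv image_iff)

lemma card_words_Suc_le: "card (words L (Suc n)) \<le> (\<Sum>x\<in>words L n. card {s. s < L \<and> (x = [] \<or> s \<noteq> hd x)})"
  unfolding words_Suc
  by (rule order.trans[OF card_image_le card_SigmaI[THEN eq_imp_le]]) (auto intro: finite_words)

lemma card_words_le:
  assumes "L \<ge> 2"
  shows "card (words L n) \<le> 2 * (L - 1) ^ n"
proof (induction n)
  case 0
  then show ?case by (simp add: words_0)
next
  case (Suc n)
  show ?case
  proof (cases n)
    case 0
    have "card (words L 1) \<le> L"
      using card_words_Suc_le[of L 0] by (simp add: words_0)
    then show ?thesis using 0 assms by simp
  next
    case (Suc m)
    have "card {s. s < L \<and> s \<noteq> hd x} = L - 1" if "x \<in> words L n" for x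
    proof -
      have "hd x \<in> set x" using that Suc by (cases x) (auto simp: words_def)
      then have "hd x < L" using that Wset_subset by (auto simp: words_def)
      moreover have "{s. s < L \<and> s \<noteq> hd x} = {..<L} - {hd x}" by auto
      ultimately show ?thesis by simp
    qed
    moreover have "x \<noteq> []" if "x \<in> words L n" for x
      using that Suc by (auto simp: words_def)
    ultimately have "card (words L (Suc n)) \<le> card (words L n) * (L - 1)"
      using card_words_Suc_le[of L n] by simp
    also have "\<dots> \<le> 2 * (L - 1) ^ n * (L - 1)"
      using Suc.IH by (rule mult_right_mono) simp
    finally show ?thesis by (simp add: algebra_simps)
  qed
qed

lemma ex_third_letter: "L \<ge> 3 \<Longrightarrow> \<exists>c<L. c \<noteq> a \<and> c \<noteq> (b::nat)"
  by presburger

section \<open>The commutator with h and its approximate range\<close>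

definition comm_h :: "nat \<Rightarrow> (nat list \<Rightarrow> 'a::ab_group_add) \<Rightarrow> nat list \<Rightarrow> 'a" where
  "comm_h L \<eta> x = (\<Sum>s<L. \<eta> (lmul s x) - \<eta> (rmul x s))"

lemma left_h_minus_right_h:
  assumes "x \<in> Wset L"
  shows "left_h L q \<eta> x - right_h L q \<eta> x = comm_h L \<eta> x"
proof -
  have "hd x < L" "last x < L" if "x \<noteq> []"
    using that Wset_subset[OF assms] hd_in_set last_in_set by blast+
  then have "(\<Sum>s<L. if length (lmul s x) < length x then c else 0) =
      (\<Sum>s<L. if length (rmul x s) < length x then c else 0)" for c :: complex
    by (cases "x = []") (simp_all add: length_lmul_less_iff length_rmul_less_iff)
  then show ?thesis
    unfolding left_h_def right_h_def comm_h_def sum.distrib sum_subtractf by simp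
qed

lemma comm_h_add: "comm_h L (\<lambda>x. f x + g x) x = comm_h L f x + comm_h L g x"
  unfolding comm_h_def by (simp add: sum.distrib[symmetric] algebra_simps)

lemma comm_h_sum: "comm_h L (\<lambda>x. \<Sum>k\<in>K. f k x) x = (\<Sum>k\<in>K. comm_h L (f k) x)"
  unfolding comm_h_def by (simp only: sum_subtractf[symmetric]) (rule sum.swap)

lemma comm_h_mult: "comm_h L (\<lambda>x. c * f x) x = c * (comm_h L f x :: 'a::ring)"
  unfolding comm_h_def by (simp add: sum_distrib_left right_diff_distrib)

lemma comm_h_of_real: "comm_h L (\<lambda>x. of_real (f x)) x = of_real (comm_h L f x)"
  unfolding comm_h_def by simp

lemma comm_h_Nil: "comm_h L \<eta> [] = 0"
  unfolding comm_h_def lmul_def rmul_def by simp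

definition fin_supp :: "nat \<Rightarrow> (nat list \<Rightarrow> 'a::zero) \<Rightarrow> bool" where
  "fin_supp L f \<longleftrightarrow> (\<forall>x. x \<notin> Wset L \<longrightarrow> f x = 0) \<and> finite {x. f x \<noteq> 0}"

lemma fin_supp_add:
  fixes f g :: "nat list \<Rightarrow> 'a::monoid_add"
  shows "fin_supp L f \<Longrightarrow> fin_supp L g \<Longrightarrow> fin_supp L (\<lambda>x. f x + g x)"
  unfolding fin_supp_def
  by (auto intro: finite_subset[of _ "{x. f x \<noteq> 0} \<union> {x. g x \<noteq> 0}"])

lemma fin_supp_imp_is_l2:
  assumes "fin_supp L \<eta>"
  shows "is_l2 L \<eta>"
proof -
  have "(\<lambda>x. (norm (\<eta> x))\<^sup>2) summable_on {x. \<eta> x \<noteq> 0}"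
    using assms unfolding fin_supp_def by simp
  then have "(\<lambda>x. (norm (\<eta> x))\<^sup>2) summable_on Wset L"
    using assms unfolding fin_supp_def
    by (subst summable_on_cong_neutral[where T="{x. \<eta> x \<noteq> 0}"]) auto
  then show ?thesis using assms unfolding fin_supp_def is_l2_def by blast
qed

lemma finite_comm_h_support:
  assumes "fin_supp L \<eta>"
  shows "finite {x \<in> Wset L. comm_h L \<eta> x \<noteq> 0}"
proof -
  have "finite {z. \<eta> z \<noteq> 0}"
    using assms unfolding fin_supp_def by blast
  then obtain M where M: "\<forall>z\<in>{z. \<eta> z \<noteq> 0}. length z < M"
    using finite_maxlen by blast
  have "length x \<le> M" if nz: "comm_h L \<eta> x \<noteq> 0" for x
  proof -
    obtain s where "\<eta> (lmul s x) \<noteq> 0 \<or> \<eta> (rmul x s) \<noteq> 0"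
      using nz unfolding comm_h_def by (metis (no_types, lifting) diff_self sum.neutral)
    then have "length (lmul s x) < M \<or> length (rmul x s) < M"
      using M by blast
    moreover have "length x \<le> Suc (length (lmul s x))" "length x \<le> Suc (length (rmul x s))"
      unfolding lmul_def rmul_def by simp_all
    ultimately show ?thesis by linarith
  qed
  then have "{x \<in> Wset L. comm_h L \<eta> x \<noteq> 0} \<subseteq> {x \<in> Wset L. length x \<le> M}"
    by blast
  then show ?thesis
    using finite_Wset_length_le by (rule finite_subset)
qed

lemma l2norm_eq_L2_set:
  assumes "finite A" "A \<subseteq> Wset L" "\<And>x. x \<in> Wset L - A \<Longrightarrow> f x = 0"
  shows "l2norm L f = L2_set (\<lambda>x. norm (f x)) A"
proof -
  have "infsum (\<lambda>x. (norm (f x))\<^sup>2) (Wset L) = infsum (\<lambda>x. (norm (f x))\<^sup>2) A"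
    using assms by (intro infsum_cong_neutral) auto
  then show ?thesis using assms(1) unfolding l2norm_def L2_set_def by simp
qed

lemma l2norm_cong: "(\<And>x. x \<in> Wset L \<Longrightarrow> f x = g x) \<Longrightarrow> l2norm L f = l2norm L g"
  unfolding l2norm_def by (simp cong: infsum_cong)

lemma l2norm_add_le:
  fixes f g :: "nat list \<Rightarrow> complex"
  assumes "finite {x \<in> Wset L. f x \<noteq> 0}" "finite {x \<in> Wset L. g x \<noteq> 0}"
  shows "l2norm L (\<lambda>x. f x + g x) \<le> l2norm L f + l2norm L g"
proof -
  define A where "A = {x \<in> Wset L. f x \<noteq> 0} \<union> {x \<in> Wset L. g x \<noteq> 0}"
  have A: "finite A" "A \<subseteq> Wset L" using assms by (auto simp: A_def)
  have eq: "l2norm L h = L2_set (\<lambda>x. norm (h x)) A"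
    if "\<And>x. x \<in> Wset L - A \<Longrightarrow> h x = 0" for h :: "nat list \<Rightarrow> complex"
    using A that by (rule l2norm_eq_L2_set)
  have "l2norm L (\<lambda>x. f x + g x) = L2_set (\<lambda>x. norm (f x + g x)) A"
    by (rule eq) (auto simp: A_def)
  also have "\<dots> \<le> L2_set (\<lambda>x. norm (f x) + norm (g x)) A"
    by (intro L2_set_mono norm_triangle_ineq) auto
  also have "\<dots> \<le> L2_set (\<lambda>x. norm (f x)) A + L2_set (\<lambda>x. norm (g x)) A"
    by (rule L2_set_triangle_ineq)
  also have "L2_set (\<lambda>x. norm (f x)) A = l2norm L f"
    by (rule eq[symmetric]) (auto simp: A_def)
  also have "L2_set (\<lambda>x. norm (g x)) A = l2norm L g"
    by (rule eq[symmetric]) (auto simp: A_def)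
  finally show ?thesis .
qed

lemma finite_residual_support:
  assumes "fin_supp L \<eta>"
  shows "finite {x \<in> Wset L. delta v x - delta w x - comm_h L \<eta> x \<noteq> 0}"
proof -
  have "{x \<in> Wset L. delta v x - delta w x - comm_h L \<eta> x \<noteq> 0} \<subseteq>
      {v, w} \<union> {x \<in> Wset L. comm_h L \<eta> x \<noteq> 0}"
    by (auto simp: delta_def)
  moreover have "finite ({v, w} \<union> {x \<in> Wset L. comm_h L \<eta> x \<noteq> 0})"
    using finite_comm_h_support[OF assms] by simp
  ultimately show ?thesis by (rule finite_subset)
qed

definition comm_h_equiv :: "nat \<Rightarrow> nat list \<Rightarrow> nat list \<Rightarrow> bool" where
  "comm_h_equiv L v w \<longleftrightarrow> (\<forall>e>0. \<exists>\<eta>. fin_supp L \<eta> \<and>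
     l2norm L (\<lambda>x. delta v x - delta w x - comm_h L \<eta> x) < e)"

lemma comm_h_equiv_refl: "comm_h_equiv L v v"
  unfolding comm_h_equiv_def
  by (intro allI impI exI[of _ "\<lambda>_. 0"]) (simp add: fin_supp_def comm_h_def l2norm_def)

lemma comm_h_equiv_trans:
  assumes "comm_h_equiv L u v" "comm_h_equiv L v w"
  shows "comm_h_equiv L u w"
  unfolding comm_h_equiv_def
proof (intro allI impI)
  fix e :: real
  assume "e > 0"
  then obtain \<eta>1 \<eta>2 where \<eta>:
      "fin_supp L \<eta>1" "l2norm L (\<lambda>x. delta u x - delta v x - comm_h L \<eta>1 x) < e / 2"
      "fin_supp L \<eta>2" "l2norm L (\<lambda>x. delta v x - delta w x - comm_h L \<eta>2 x) < e / 2"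
    using assms unfolding comm_h_equiv_def by (meson half_gt_zero)
  have "l2norm L (\<lambda>x. delta u x - delta w x - comm_h L (\<lambda>x. \<eta>1 x + \<eta>2 x) x) =
      l2norm L (\<lambda>x. (delta u x - delta v x - comm_h L \<eta>1 x) + (delta v x - delta w x - comm_h L \<eta>2 x))"
    by (simp add: comm_h_add algebra_simps)
  also have "\<dots> \<le> l2norm L (\<lambda>x. delta u x - delta v x - comm_h L \<eta>1 x) +
      l2norm L (\<lambda>x. delta v x - delta w x - comm_h L \<eta>2 x)"
    using \<eta> by (intro l2norm_add_le finite_residual_support)
  also have "\<dots> < e / 2 + e / 2"
    by (rule add_strict_mono[OF \<eta>(2) \<eta>(4)])
  finally show "\<exists>\<eta>. fin_supp L \<eta> \<and> l2norm L (\<lambda>x. delta u x - delta w x - comm_h L \<eta> x) < e"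
    using fin_supp_add[OF \<eta>(1,3)] by auto
qed

lemma comm_h_equiv_imp_approx:
  assumes "comm_h_equiv L v w" "\<epsilon> > 0"
  shows "\<exists>\<eta>. is_l2 L \<eta> \<and>
    l2norm L (\<lambda>x. delta v x - delta w x - (left_h L q \<eta> x - right_h L q \<eta> x)) < \<epsilon>"
proof -
  obtain \<eta> where "fin_supp L \<eta>" "l2norm L (\<lambda>x. delta v x - delta w x - comm_h L \<eta> x) < \<epsilon>"
    using assms unfolding comm_h_equiv_def by blast
  moreover have "l2norm L (\<lambda>x. delta v x - delta w x - (left_h L q \<eta> x - right_h L q \<eta> x)) =
      l2norm L (\<lambda>x. delta v x - delta w x - comm_h L \<eta> x)"
    by (rule l2norm_cong) (simp add: left_h_minus_right_h)
  ultimately show ?thesis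
    using fin_supp_imp_is_l2 by (intro exI[of _ \<eta>]) simp
qed

section \<open>Layered test vectors\<close>

definition infix_at :: "nat list \<Rightarrow> nat \<Rightarrow> nat \<Rightarrow> nat list \<Rightarrow> bool" where
  "infix_at y i j x \<longleftrightarrow> (\<exists>a b. x = a @ y @ b \<and> length a = i \<and> length b = j)"

lemma infix_at_length: "infix_at y i j x \<Longrightarrow> length x = i + length y + j"
  unfolding infix_at_def by auto

lemma infix_at_0_0: "infix_at y 0 0 x \<longleftrightarrow> x = y"
  unfolding infix_at_def by auto

lemma infix_at_Suc_Cons: "infix_at y (Suc i) j (s # x) \<longleftrightarrow> infix_at y i j x"
proof
  assume "infix_at y (Suc i) j (s # x)"
  then obtain a b where "s # x = a @ y @ b" "length a = Suc i" "length b = j"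
    unfolding infix_at_def by blast
  then show "infix_at y i j x"
    unfolding infix_at_def by (cases a) auto
next
  assume "infix_at y i j x"
  then show "infix_at y (Suc i) j (s # x)"
    unfolding infix_at_def by (metis append_Cons length_Cons)
qed

lemma infix_at_tl: "x \<noteq> [] \<Longrightarrow> infix_at y i j (tl x) \<longleftrightarrow> infix_at y (Suc i) j x"
  by (cases x) (simp_all add: infix_at_Suc_Cons)

lemma infix_at_rev: "infix_at (rev y) j i (rev x) \<longleftrightarrow> infix_at y i j x"
proof -
  have rev_infix: "infix_at (rev z) n m (rev u)" if uz: "infix_at z m n u" for z m n u
  proof -
    obtain a b where "u = a @ z @ b" "length a = m" "length b = n"
      using uz unfolding infix_at_def by blast
    then show ?thesis
      unfolding infix_at_def by (intro exI[of _ "rev b"] exI[of _ "rev a"]) simp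
  qed
  show ?thesis
    using rev_infix[of y i j x] rev_infix[of "rev y" j i "rev x"] by auto
qed

lemma finite_infix_at: "finite {x \<in> Wset L. infix_at y i j x}"
  by (rule finite_subset[OF _ finite_Wset_length_le[of L "i + length y + j"]])
    (auto dest: infix_at_length)

lemma card_infix_at_le:
  assumes "L \<ge> 2"
  shows "card {x \<in> Wset L. infix_at y i j x} \<le> 4 * (L - 1) ^ (i + j)"
proof -
  let ?split = "\<lambda>x. (take i x, drop (i + length y) x)"
  have split: "x = take i x @ y @ drop (i + length y) x" "length (take i x) = i"
    "length (drop (i + length y) x) = j" if "infix_at y i j x" for x
    using that unfolding infix_at_def by auto
  have "inj_on ?split {x \<in> Wset L. infix_at y i j x}"
  proof (rule inj_onI)
    fix x z
    assume "x \<in> {x \<in> Wset L. infix_at y i j x}" "z \<in> {x \<in> Wset L. infix_at y i j x}" "?split x = ?split z"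
    then show "x = z" using split(1)[of x] split(1)[of z] by auto
  qed
  moreover have "?split x \<in> words L i \<times> words L j" if "x \<in> Wset L" "infix_at y i j x" for x
    using split[OF that(2)] that(1) by (simp add: words_def Wset_take Wset_drop)
  ultimately have "card {x \<in> Wset L. infix_at y i j x} \<le> card (words L i \<times> words L j)"
    by (intro card_inj_on_le finite_cartesian_product finite_words) auto
  also have "\<dots> = card (words L i) * card (words L j)"
    by (rule card_cartesian_product)
  also have "\<dots> \<le> (2 * (L - 1) ^ i) * (2 * (L - 1) ^ j)"
    by (intro mult_mono card_words_le[OF assms]) auto
  finally show ?thesis by (simp add: power_add)
qed

definition frame_ind :: "nat \<Rightarrow> nat list \<Rightarrow> nat \<Rightarrow> nat list \<Rightarrow> real" where
  "frame_ind L y k x = of_bool (x \<in> Wset L \<and> infix_at y k k x)"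

definition frame_diff :: "nat list \<Rightarrow> nat \<Rightarrow> nat list \<Rightarrow> real" where
  "frame_diff y k x = of_bool (infix_at y (Suc k) k x) - of_bool (infix_at y k (Suc k) x)"

lemma sum_lmul_split:
  assumes "x \<in> Wset L" "x \<noteq> []"
  shows "(\<Sum>s<L. f (lmul s x)) = f (tl x) + (\<Sum>s\<in>{..<L} - {hd x}. f (s # x))"
proof -
  have "hd x < L" using assms Wset_subset hd_in_set by blast
  then have "(\<Sum>s<L. f (lmul s x)) = f (lmul (hd x) x) + (\<Sum>s\<in>{..<L} - {hd x}. f (lmul s x))"
    by (intro sum.remove) auto
  also have "(\<Sum>s\<in>{..<L} - {hd x}. f (lmul s x)) = (\<Sum>s\<in>{..<L} - {hd x}. f (s # x))"
    by (intro sum.cong) (auto simp: lmul_def)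
  finally show ?thesis using assms(2) by (simp add: lmul_def)
qed

lemma sum_of_bool_Cons_eq:
  "finite S \<Longrightarrow> (\<Sum>s\<in>S. of_bool (s # x = y)) = (of_bool (y \<noteq> [] \<and> hd y \<in> S \<and> tl y = x) :: 'a::comm_semiring_1)"
proof -
  assume "finite S"
  have "of_bool (s # x = y) = (if s = hd y then of_bool (y \<noteq> [] \<and> tl y = x) else (0::'a))" for s
    by (cases y) auto
  then show ?thesis using \<open>finite S\<close> by (simp add: sum.delta)
qed

lemma sum_lmul_frame_ind:
  assumes x: "x \<in> Wset L" "x \<noteq> []" and y: "y \<in> Wset L" "y \<noteq> []"
  shows "(\<Sum>s<L. frame_ind L y k (lmul s x)) = of_bool (infix_at y (Suc k) k x) +
    (if k = 0 then of_bool (x = tl y) else real (L - 1) * of_bool (infix_at y (k - 1) k x))"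
proof -
  have "hd x < L" using x Wset_subset hd_in_set by blast
  have "frame_ind L y k (tl x) = of_bool (infix_at y (Suc k) k x)"
    using Wset_tl[OF x(1)] infix_at_tl[OF x(2)] by (simp add: frame_ind_def)
  moreover have "(\<Sum>s\<in>{..<L} - {hd x}. frame_ind L y k (s # x)) =
      (\<Sum>s\<in>{..<L} - {hd x}. of_bool (infix_at y k k (s # x)))"
    using x by (intro sum.cong) (auto simp: frame_ind_def Wset_Cons_iff)
  moreover have "(\<Sum>s\<in>{..<L} - {hd x}. of_bool (infix_at y k k (s # x))) =
      (if k = 0 then of_bool (x = tl y) else real (L - 1) * of_bool (infix_at y (k - 1) k x))"
  proof (cases k)
    case 0
    have "hd y \<in> {..<L} - {hd x}" if "tl y = x"
      using y x that Wset_Cons_iff[of "hd y" x L] by (metis Diff_iff lessThan_iff list.collapse singletonD)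
    moreover have "(\<Sum>s\<in>{..<L} - {hd x}. of_bool (infix_at y k k (s # x))) =
        (of_bool (y \<noteq> [] \<and> hd y \<in> {..<L} - {hd x} \<and> tl y = x) :: real)"
      unfolding 0 infix_at_0_0 by (rule sum_of_bool_Cons_eq) simp
    ultimately show ?thesis using 0 y(2) by auto
  next
    case (Suc k')
    then show ?thesis using \<open>hd x < L\<close> by (simp add: infix_at_Suc_Cons)
  qed
  ultimately show ?thesis unfolding sum_lmul_split[OF x] by linarith
qed

lemma frame_ind_rev: "frame_ind L (rev y) k (rev x) = frame_ind L y k x"
  by (simp add: frame_ind_def Wset_rev_iff infix_at_rev)

lemma sum_rmul_frame_ind:
  assumes x: "x \<in> Wset L" "x \<noteq> []" and y: "y \<in> Wset L" "y \<noteq> []"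
  shows "(\<Sum>s<L. frame_ind L y k (rmul x s)) = of_bool (infix_at y k (Suc k) x) +
    (if k = 0 then of_bool (x = butlast y) else real (L - 1) * of_bool (infix_at y k (k - 1) x))"
proof -
  have "(\<Sum>s<L. frame_ind L y k (rmul x s)) = (\<Sum>s<L. frame_ind L (rev y) k (lmul s (rev x)))"
    by (metis frame_ind_rev rev_rev_ident rmul_eq_rev_lmul)
  also have "\<dots> = of_bool (infix_at (rev y) (Suc k) k (rev x)) +
    (if k = 0 then of_bool (rev x = tl (rev y)) else real (L - 1) * of_bool (infix_at (rev y) (k - 1) k (rev x)))"
    using x y by (intro sum_lmul_frame_ind) (simp_all add: Wset_rev_iff)
  also have "rev x = tl (rev y) \<longleftrightarrow> x = butlast y"
    by (metis butlast_rev rev_rev_ident)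
  finally show ?thesis by (simp add: infix_at_rev)
qed

lemma comm_h_frame_ind:
  assumes x: "x \<in> Wset L" and y: "y \<in> Wset L" "y \<noteq> []"
  shows "comm_h L (frame_ind L y k) x = frame_diff y k x +
    (if k = 0 then of_bool (x = tl y) - of_bool (x = butlast y)
     else - (real (L - 1) * frame_diff y (k - 1) x))"
proof (cases "x = []")
  case True
  have "\<not> infix_at y i j []" for i j
    using y(2) infix_at_length by fastforce
  moreover have "[] = tl y \<longleftrightarrow> [] = butlast y"
    using y(2) by (cases y) auto
  ultimately show ?thesis using True by (simp add: comm_h_Nil frame_diff_def)
next
  case False
  show ?thesis
    unfolding comm_h_def sum_subtractf sum_lmul_frame_ind[OF x False y] sum_rmul_frame_ind[OF x False y]
    by (cases k) (simp_all add: frame_diff_def right_diff_distrib)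
qed

lemma sum_weighted_telescope:
  fixes c u :: "nat \<Rightarrow> real"
  assumes "c 0 = 1" "c N = 0"
  shows "(\<Sum>k<N. c k * (u k + (if k = 0 then a else - (b * u (k - 1))))) =
    a + (\<Sum>k<N. (c k - b * c (Suc k)) * u k)"
proof -
  obtain n where N: "N = Suc n" using assms by (cases N) auto
  have "(\<Sum>k<N. c k * (if k = 0 then a else - (b * u (k - 1)))) = a - (\<Sum>k<n. b * c (Suc k) * u k)"
    unfolding N sum.lessThan_Suc_shift using assms(1) by (simp add: sum_negf algebra_simps)
  also have "(\<Sum>k<n. b * c (Suc k) * u k) = (\<Sum>k<N. b * c (Suc k) * u k)"
    using assms(2) by (simp add: N)
  finally show ?thesis
    by (simp add: distrib_left sum.distrib sum_subtractf left_diff_distrib)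
qed

definition frame_vec :: "nat \<Rightarrow> nat list \<Rightarrow> nat \<Rightarrow> nat list \<Rightarrow> real" where
  "frame_vec L y N x = (\<Sum>k<N. (real N - real k) / (real N * real (L - 1) ^ k) * frame_ind L y k x)"

definition frame_error :: "nat \<Rightarrow> nat list \<Rightarrow> nat \<Rightarrow> nat list \<Rightarrow> real" where
  "frame_error L y N x = (\<Sum>k<N. frame_diff y k x / (real N * real (L - 1) ^ k))"

lemma comm_h_frame_vec:
  assumes "x \<in> Wset L" "y \<in> Wset L" "y \<noteq> []" "N > 0" "L \<ge> 2"
  shows "comm_h L (frame_vec L y N) x =
    of_bool (x = tl y) - of_bool (x = butlast y) + frame_error L y N x"
proof -
  define c where "c k = (real N - real k) / (real N * real (L - 1) ^ k)" for k
  have "comm_h L (frame_vec L y N) x = (\<Sum>k<N. c k * comm_h L (frame_ind L y k) x)"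
    unfolding frame_vec_def c_def by (simp only: comm_h_sum comm_h_mult)
  also have "\<dots> = (\<Sum>k<N. c k * (frame_diff y k x +
      (if k = 0 then of_bool (x = tl y) - of_bool (x = butlast y)
       else - (real (L - 1) * frame_diff y (k - 1) x))))"
    by (simp only: comm_h_frame_ind[OF assms(1-3)])
  also have "\<dots> = of_bool (x = tl y) - of_bool (x = butlast y) +
      (\<Sum>k<N. (c k - real (L - 1) * c (Suc k)) * frame_diff y k x)"
    by (rule sum_weighted_telescope) (use assms(4) in \<open>simp_all add: c_def\<close>)
  also have "(\<Sum>k<N. (c k - real (L - 1) * c (Suc k)) * frame_diff y k x) = frame_error L y N x"
    unfolding frame_error_def using assms(4,5)
    by (intro sum.cong) (simp_all add: c_def field_simps)
  finally show ?thesis .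
qed

lemma frame_diff_nonzero_length: "frame_diff y k x \<noteq> 0 \<Longrightarrow> length x = Suc (2 * k + length y)"
  unfolding frame_diff_def
  by (cases "infix_at y (Suc k) k x") (auto dest: infix_at_length)

lemma frame_error_sq:
  "(frame_error L y N x)\<^sup>2 = (\<Sum>k<N. (frame_diff y k x / (real N * real (L - 1) ^ k))\<^sup>2)"
proof (cases "\<exists>k<N. frame_diff y k x \<noteq> 0")
  case True
  then obtain k where k: "k < N" "frame_diff y k x \<noteq> 0" by blast
  define t where "t j = frame_diff y j x / (real N * real (L - 1) ^ j)" for j
  have t0: "t j = 0" if "j \<noteq> k" for j
  proof -
    have "frame_diff y j x = 0"
      using frame_diff_nonzero_length[of y j x] frame_diff_nonzero_length[OF k(2)] that by auto
    then show ?thesis by (simp add: t_def)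
  qed
  have single: "(\<Sum>j<N. g (t j)) = g (t k)" if "g 0 = 0" for g :: "real \<Rightarrow> real"
  proof -
    have "(\<Sum>j<N. g (t j)) = (\<Sum>j<N. if j = k then g (t k) else 0)"
      using t0 that by (intro sum.cong) auto
    then show ?thesis using k(1) by simp
  qed
  have "(\<Sum>j<N. t j) = t k" "(\<Sum>j<N. (t j)\<^sup>2) = (t k)\<^sup>2"
    using single[of "\<lambda>r. r"] single[of "\<lambda>r. r\<^sup>2"] by simp_all
  then show ?thesis unfolding frame_error_def t_def by simp
next
  case False
  then show ?thesis unfolding frame_error_def by simp
qed

lemma sum_sq_frame_diff_le:
  assumes "finite A" "A \<subseteq> Wset L" "L \<ge> 2"
  shows "(\<Sum>x\<in>A. (frame_diff y k x)\<^sup>2) \<le> 8 * real (L - 1) ^ (2 * k + 1)"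
proof -
  have card_le: "real (card (A \<inter> {x. infix_at y i j x})) \<le> 4 * real (L - 1) ^ (i + j)" for i j
  proof -
    have "card (A \<inter> {x. infix_at y i j x}) \<le> card {x \<in> Wset L. infix_at y i j x}"
      using assms(2) by (intro card_mono finite_infix_at) auto
    also have "\<dots> \<le> 4 * (L - 1) ^ (i + j)"
      by (rule card_infix_at_le[OF assms(3)])
    finally show ?thesis by (metis of_nat_le_iff of_nat_mult of_nat_numeral of_nat_power)
  qed
  have "(\<Sum>x\<in>A. (frame_diff y k x)\<^sup>2) \<le>
      (\<Sum>x\<in>A. of_bool (infix_at y (Suc k) k x) + of_bool (infix_at y k (Suc k) x))"
    by (intro sum_mono) (simp add: frame_diff_def)
  also have "\<dots> = real (card (A \<inter> {x. infix_at y (Suc k) k x})) +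
      real (card (A \<inter> {x. infix_at y k (Suc k) x}))"
    using assms(1) by (simp add: sum.distrib)
  also have "\<dots> \<le> 4 * real (L - 1) ^ (Suc k + k) + 4 * real (L - 1) ^ (k + Suc k)"
    by (intro add_mono card_le)
  also have "\<dots> = 8 * real (L - 1) ^ (2 * k + 1)"
    by (simp add: mult_2)
  finally show ?thesis .
qed

lemma sum_sq_frame_error_le:
  assumes "finite A" "A \<subseteq> Wset L" "L \<ge> 2" "N > 0"
  shows "(\<Sum>x\<in>A. (frame_error L y N x)\<^sup>2) \<le> 8 * real (L - 1) / real N"
proof -
  define b where "b = real (L - 1)"
  have b: "b > 0" using assms(3) by (simp add: b_def)
  have "(\<Sum>x\<in>A. (frame_error L y N x)\<^sup>2) =
      (\<Sum>k<N. (\<Sum>x\<in>A. (frame_diff y k x)\<^sup>2) / (real N * b ^ k)\<^sup>2)"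
    unfolding frame_error_sq b_def
    by (subst sum.swap) (simp add: sum_divide_distrib power_divide)
  also have "\<dots> \<le> (\<Sum>k<N. 8 * b ^ (2 * k + 1) / (real N * b ^ k)\<^sup>2)"
    unfolding b_def by (intro sum_mono divide_right_mono sum_sq_frame_diff_le assms) simp
  also have "\<dots> = (\<Sum>k<N. 8 * b / (real N)\<^sup>2)"
    using b by (intro sum.cong) (simp_all add: power_add power_mult power2_eq_square field_simps)
  also have "\<dots> = 8 * b / real N"
    using assms(4) by (simp add: power2_eq_square)
  finally show ?thesis by (simp add: b_def)
qed

lemma frame_vec_nonzero:
  assumes "frame_vec L y N x \<noteq> 0"
  shows "x \<in> Wset L" "length x \<le> length y + 2 * N"
proof -
  obtain k where "k \<in> {..<N}"
      "(real N - real k) / (real N * real (L - 1) ^ k) * frame_ind L y k x \<noteq> 0"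
    by (rule sum.not_neutral_contains_not_neutral[OF assms[unfolded frame_vec_def]])
  then have k: "k < N" "frame_ind L y k x \<noteq> 0" by auto
  then show "x \<in> Wset L"
    by (simp add: frame_ind_def)
  have "length x = k + length y + k"
    using k(2) by (simp add: frame_ind_def infix_at_length)
  then show "length x \<le> length y + 2 * N"
    using k(1) by linarith
qed

lemma frame_error_nonzero:
  assumes "frame_error L y N x \<noteq> 0"
  shows "length x \<le> length y + 2 * N"
proof -
  obtain k where "k \<in> {..<N}" "frame_diff y k x / (real N * real (L - 1) ^ k) \<noteq> 0"
    by (rule sum.not_neutral_contains_not_neutral[OF assms[unfolded frame_error_def]])
  then have "k < N" "length x = Suc (2 * k + length y)"
    using frame_diff_nonzero_length by auto
  then show ?thesis by linarith
qed

lemma l2norm_frame_error_le: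
  assumes "L \<ge> 2" "N > 0"
  shows "l2norm L (\<lambda>x. complex_of_real (frame_error L y N x)) \<le> sqrt (8 * real (L - 1) / real N)"
proof -
  define A where "A = {x \<in> Wset L. length x \<le> length y + 2 * N}"
  have A: "finite A" "A \<subseteq> Wset L"
    unfolding A_def by (rule finite_Wset_length_le) blast
  have "l2norm L (\<lambda>x. complex_of_real (frame_error L y N x)) =
      L2_set (\<lambda>x. norm (complex_of_real (frame_error L y N x))) A"
    using A frame_error_nonzero by (intro l2norm_eq_L2_set) (auto simp: A_def)
  also have "\<dots> = sqrt (\<Sum>x\<in>A. (frame_error L y N x)\<^sup>2)"
    unfolding L2_set_def by simp
  also have "\<dots> \<le> sqrt (8 * real (L - 1) / real N)"
    using A assms by (intro real_sqrt_le_mono sum_sq_frame_error_le)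
  finally show ?thesis .
qed

lemma comm_h_equiv_tl_butlast:
  assumes y: "y \<in> Wset L" "y \<noteq> []" and L: "L \<ge> 2"
  shows "comm_h_equiv L (tl y) (butlast y)"
  unfolding comm_h_equiv_def
proof (intro allI impI)
  fix e :: real
  assume "e > 0"
  obtain N :: nat where N: "8 * real (L - 1) / e\<^sup>2 < real N"
    using reals_Archimedean2 by blast
  moreover have "0 < 8 * real (L - 1) / e\<^sup>2"
    using L \<open>e > 0\<close> by simp
  ultimately have "N > 0" by linarith
  have "8 * real (L - 1) < real N * e\<^sup>2"
    using N \<open>e > 0\<close> by (simp only: pos_divide_less_eq zero_less_power2)
  then have "8 * real (L - 1) / real N < e\<^sup>2"
    using \<open>N > 0\<close> by (metis mult.commute of_nat_0_less_iff pos_divide_less_eq)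
  then have "sqrt (8 * real (L - 1) / real N) < e"
    using \<open>e > 0\<close> by (metis real_sqrt_abs real_sqrt_less_mono abs_of_pos)
  define \<eta> where "\<eta> = (\<lambda>x. complex_of_real (frame_vec L y N x))"
  have supp: "{x. frame_vec L y N x \<noteq> 0} \<subseteq> {x \<in> Wset L. length x \<le> length y + 2 * N}"
    using frame_vec_nonzero by blast
  have "fin_supp L \<eta>"
    unfolding fin_supp_def \<eta>_def using supp finite_subset[OF supp finite_Wset_length_le] by auto
  have "l2norm L (\<lambda>x. delta (tl y) x - delta (butlast y) x - comm_h L \<eta> x) =
      l2norm L (\<lambda>x. - complex_of_real (frame_error L y N x))"
  proof (rule l2norm_cong)
    fix x
    assume "x \<in> Wset L"
    from comm_h_frame_vec[OF this y \<open>N > 0\<close> L]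
    show "delta (tl y) x - delta (butlast y) x - comm_h L \<eta> x = - complex_of_real (frame_error L y N x)"
      unfolding \<eta>_def comm_h_of_real by (simp add: delta_def of_bool_def)
  qed
  also have "\<dots> \<le> sqrt (8 * real (L - 1) / real N)"
    using l2norm_frame_error_le[OF L \<open>N > 0\<close>] by (simp add: l2norm_def)
  finally show "\<exists>\<eta>. fin_supp L \<eta> \<and> l2norm L (\<lambda>x. delta (tl y) x - delta (butlast y) x - comm_h L \<eta> x) < e"
    using \<open>fin_supp L \<eta>\<close> \<open>sqrt (8 * real (L - 1) / real N) < e\<close> by auto
qed

section \<open>Words of equal length\<close>

lemma comm_h_equiv_windows:
  assumes "y \<in> Wset L" "L \<ge> 2" "i + n \<le> length y"
  shows "comm_h_equiv L (take n (drop i y)) (take n y)"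
  using assms(3)
proof (induction i)
  case 0
  then show ?case by (simp add: comm_h_equiv_refl)
next
  case (Suc i)
  let ?u = "take (Suc n) (drop i y)"
  have "?u \<in> Wset L" using assms(1) by (intro Wset_take Wset_drop)
  moreover have "?u \<noteq> []" using Suc.prems by simp
  moreover have "tl ?u = take n (drop (Suc i) y)"
    by (simp add: tl_take tl_drop drop_Suc)
  moreover have "butlast ?u = take n (drop i y)"
    using Suc.prems by (simp add: butlast_take)
  ultimately have "comm_h_equiv L (take n (drop (Suc i) y)) (take n (drop i y))"
    using comm_h_equiv_tl_butlast assms(2) by metis
  then show ?case
    using Suc by (auto intro: comm_h_equiv_trans)
qed

lemma comm_h_equiv_if_last_neq_hd:
  assumes "x \<in> Wset L" "z \<in> Wset L" "length x = length z" "last z \<noteq> hd x" "L \<ge> 2"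
  shows "comm_h_equiv L x z"
proof -
  have "z @ x \<in> Wset L" using assms by (intro Wset_append) auto
  then have "comm_h_equiv L (take (length x) (drop (length z) (z @ x))) (take (length x) (z @ x))"
    using assms(3,5) by (intro comm_h_equiv_windows) auto
  then show ?thesis using assms(3) by simp
qed

lemma comm_h_equiv_same_length:
  assumes L: "L \<ge> 3" and "v \<in> Wset L" "w \<in> Wset L" "length v = length w"
  shows "comm_h_equiv L v w"
proof (cases "v = []")
  case True
  then show ?thesis using assms by (simp add: comm_h_equiv_refl)
next
  case False
  obtain c where c: "c < L" "c \<noteq> last w" "c \<noteq> hd v" using ex_third_letter[OF L] by blast
  obtain d where d: "d < L" "d \<noteq> c" "d \<noteq> hd v" using ex_third_letter[OF L] by blast
  define u where "u = map (\<lambda>i. if even i then c else d) [0..<length v]"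
  have u: "length u = length v" "hd u = c" "last u = c \<or> last u = d"
    using False by (auto simp: u_def hd_map last_map)
  have "u \<in> Wset L"
    using c(1) d(1,2) unfolding Wset_def u_def by auto
  then have "comm_h_equiv L v u" "comm_h_equiv L u w"
    using assms u c d by (auto intro!: comm_h_equiv_if_last_neq_hd)
  then show ?thesis by (rule comm_h_equiv_trans)
qed

theorem lemma2p4:
  fixes L :: nat and q \<epsilon> :: real and v w :: "nat list"
  assumes "L \<ge> 3" and "0 < q" and "q \<le> 1"
    and "v \<in> Wset L" and "w \<in> Wset L" and "length v = length w"
    and "\<epsilon> > 0"
  shows "\<exists>\<eta>. is_l2 L \<eta> \<and>
    l2norm L (\<lambda>x. delta v x - delta w x - (left_h L q \<eta> x - right_h L q \<eta> x)) < \<epsilon>"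
  using comm_h_equiv_same_length[OF assms(1,4-6)] assms(7) by (rule comm_h_equiv_imp_approx)

end
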